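(* Let $D$ be an Egyptian domain with fraction field $K$, and let $x$ be an indeterminate. For a subring $A$ of $K(x)$ with fraction field $K(x)$, let $R(A)$ denote the subring of $K(x)$ generated by $\{1/a \mid a \in A\setminus\{0\}\}$. Then $R(D[x]) = R(K[x])$. Consequently, $D[x]$ is Bonaccian.
   Context: For an integral domain $A$ with fraction field $L$, an element of $L$ is $A$-Egyptian if it is a sum of reciprocals of distinct nonzero elements of $A$. $A$ is Egyptian if every nonzero element of $L$ is $A$-Egyptian, and $A$ is Bonaccian if for every nonzero $\alpha\in L$, either $\alpha$ or $\alpha^{-1}$ is $A$-Egyptian. *)

theory Defs
  imports "HOL-Computational_Algebra.Polynomial" "HOL-Computational_Algebra.Fraction_Field"
begin

definition egyptian_elem :: "'f::field set \<Rightarrow> 'f \<Rightarrow> bool" where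
  "egyptian_elem A \<alpha> \<longleftrightarrow> (\<exists>S. finite S \<and> S \<subseteq> A - {0} \<and> \<alpha> = (\<Sum>s\<in>S. inverse s))"

(* A is Egyptian: every nonzero element of the ambient field (= fraction field of A) is
   A-Egyptian. *)
definition egyptian :: "'f::field set \<Rightarrow> bool" where
  "egyptian A \<longleftrightarrow> (\<forall>\<alpha>. \<alpha> \<noteq> 0 \<longrightarrow> egyptian_elem A \<alpha>)"

definition bonaccian :: "'f::field set \<Rightarrow> bool" where
  "bonaccian A \<longleftrightarrow> (\<forall>\<alpha>. \<alpha> \<noteq> 0 \<longrightarrow> egyptian_elem A \<alpha> \<or> egyptian_elem A (inverse \<alpha>))"

definition subring_generated :: "'r::comm_ring_1 set \<Rightarrow> 'r set" where
  "subring_generated S = \<Inter>{T. 1 \<in> T \<and> S \<subseteq> T \<and>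
      (\<forall>x\<in>T. \<forall>y\<in>T. x + y \<in> T \<and> x * y \<in> T \<and> - x \<in> T)}"

definition R_ring :: "'f::field set \<Rightarrow> 'f set" where
  "R_ring A = subring_generated (inverse ` (A - {0}))"

definition emb :: "'a::idom \<Rightarrow> 'a fract" where
  "emb a = Fract a 1"

(* K(x) = Frac(K[x]) with K = Frac D *)
type_synonym 'a ratfun = "'a fract poly fract"

definition Kx :: "'a::idom ratfun set" where
  "Kx = range (\<lambda>p. Fract p 1)"

definition Dx :: "'a::idom ratfun set" where
  "Dx = range (\<lambda>p::'a poly. Fract (map_poly emb p) 1)"

end

(* Over K = Frac D, every nonzero polynomial s satisfies d s = s' with s' in D[x] and
   d in D - {0}. Writing d as a sum of reciprocals 1/e of distinct e in D (D is Egyptian)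
   gives 1/s = sum of 1/(e s'), a sum of reciprocals of distinct elements of D[x], all of
   degree deg s. In particular 1/s lies in R(D[x]) for every s in K[x], so
   R(D[x]) = R(K[x]).
   For a fraction r/q with deg r <= deg q, the greedy step q = s r + m with s = q div r gives
   r/q = 1/s - m/(q s). Expand 1/s as above, in degree deg s, and -m/(q s), by induction on
   deg r, in degrees > deg s: the two expansions have no denominator in common. Since every
   nonzero element of K(x) or its inverse is such a fraction, D[x] is Bonaccian. *)

theory Submission
  imports Defs "HOL-Computational_Algebra.Polynomial_Factorial"
begin

lemma egyptian_elemI:
  assumes "finite E" "inj_on f E" "f ` E \<subseteq> A - {0}"
  shows "egyptian_elem A (\<Sum>e\<in>E. inverse (f e))"
proof -
  have "(\<Sum>e\<in>E. inverse (f e)) = (\<Sum>a\<in>f ` E. inverse a)"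
    using sum.reindex[OF assms(2), of inverse] by simp
  then show ?thesis
    unfolding egyptian_elem_def using assms(1,3) by (intro exI[of _ "f ` E"]) simp
qed

lemma egyptian_elem_0: "egyptian_elem A 0"
  unfolding egyptian_elem_def by (intro exI[of _ "{}"]) simp

lemma egyptian_elem_mono:
  assumes "egyptian_elem A \<alpha>" "A \<subseteq> B"
  shows "egyptian_elem B \<alpha>"
  using assms unfolding egyptian_elem_def by blast

lemma egyptian_elem_add:
  assumes "egyptian_elem A \<alpha>" "egyptian_elem B \<beta>" "A \<inter> B = {}"
  shows "egyptian_elem (A \<union> B) (\<alpha> + \<beta>)"
proof -
  obtain S where S: "finite S" "S \<subseteq> A - {0}" "\<alpha> = (\<Sum>s\<in>S. inverse s)"
    using assms(1) unfolding egyptian_elem_def by blast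
  obtain T where T: "finite T" "T \<subseteq> B - {0}" "\<beta> = (\<Sum>t\<in>T. inverse t)"
    using assms(2) unfolding egyptian_elem_def by blast
  have "S \<inter> T = {}" using S(2) T(2) assms(3) by blast
  then have "\<alpha> + \<beta> = (\<Sum>u\<in>S \<union> T. inverse u)"
    using S T by (simp add: sum.union_disjoint)
  moreover have "S \<union> T \<subseteq> A \<union> B - {0}" using S(2) T(2) by blast
  ultimately show ?thesis
    unfolding egyptian_elem_def using S(1) T(1) by (intro exI[of _ "S \<union> T"]) simp
qed

lemma subring_generated_base: "x \<in> S \<Longrightarrow> x \<in> subring_generated S"
  unfolding subring_generated_def by blast

lemma subring_generated_one: "1 \<in> subring_generated S"
  unfolding subring_generated_def by blast

lemma subring_generated_closed:
  assumes "x \<in> subring_generated S" "y \<in> subring_generated S"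
  shows "x + y \<in> subring_generated S" "x * y \<in> subring_generated S"
    "- x \<in> subring_generated S"
  using assms unfolding subring_generated_def by blast+

lemma subring_generated_zero: "0 \<in> subring_generated S"
proof -
  have "1 + - 1 \<in> subring_generated S"
    using subring_generated_one subring_generated_closed by blast
  then show ?thesis by simp
qed

lemma subring_generated_sum:
  "finite E \<Longrightarrow> (\<And>e. e \<in> E \<Longrightarrow> f e \<in> subring_generated S) \<Longrightarrow>
    sum f E \<in> subring_generated S"
  by (induction E rule: finite_induct)
    (simp_all add: subring_generated_zero subring_generated_closed)

lemma subring_generated_subsetI:
  assumes "S \<subseteq> subring_generated S'"
  shows "subring_generated S \<subseteq> subring_generated S'"
  unfolding subring_generated_def[of S]
  by (intro Inter_lower CollectI conjI ballI assms subring_generated_one subring_generated_closed)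

lemma R_ring_mono: "A \<subseteq> B \<Longrightarrow> R_ring A \<subseteq> R_ring B"
  unfolding R_ring_def
  by (intro subring_generated_subsetI) (auto intro: subring_generated_base)

lemma R_ring_subsetI:
  "(\<And>b. b \<in> B - {0} \<Longrightarrow> inverse b \<in> R_ring A) \<Longrightarrow> R_ring B \<subseteq> R_ring A"
  unfolding R_ring_def by (intro subring_generated_subsetI) auto

lemma egyptian_elem_in_R_ring:
  assumes "egyptian_elem A \<alpha>"
  shows "\<alpha> \<in> R_ring A"
proof -
  obtain S where S: "finite S" "S \<subseteq> A - {0}" "\<alpha> = (\<Sum>s\<in>S. inverse s)"
    using assms unfolding egyptian_elem_def by blast
  show ?thesis
    unfolding S(3) R_ring_def using S(1,2)
    by (intro subring_generated_sum) (auto intro: subring_generated_base)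
qed

lemma degree_div_eq_diff:
  fixes q r :: "'a::field poly"
  assumes "q \<noteq> 0" "r \<noteq> 0" "degree r \<le> degree q"
  shows "q div r \<noteq> 0" "degree (q div r) = degree q - degree r"
proof -
  have qr: "q = q div r * r + q mod r" by simp
  have deg_mod: "q mod r = 0 \<or> degree (q mod r) < degree r"
    using \<open>r \<noteq> 0\<close> by (rule degree_mod_less)
  show "q div r \<noteq> 0"
  proof
    assume "q div r = 0"
    then have "q = q mod r" using qr by simp
    then show False using deg_mod assms by auto
  qed
  then have "degree (q div r * r) = degree (q div r) + degree r"
    using \<open>r \<noteq> 0\<close> by (rule degree_mult_eq)
  moreover have "degree q = degree (q div r * r)"
  proof (cases "q mod r = 0")
    case False
    then have "degree (q mod r) < degree (q div r * r)"
      using deg_mod \<open>degree (q div r * r) = _\<close> by simp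
    then show ?thesis by (subst qr) (rule degree_add_eq_left)
  qed (metis qr add_0_right)
  ultimately show "degree (q div r) = degree q - degree r" by simp
qed

lemma inverse_add_divide_eq:
  fixes Q S R M :: "'a::field"
  assumes "Q = S * R + M" "S \<noteq> 0" "Q \<noteq> 0"
  shows "R / Q = inverse S + - M / (Q * S)"
proof -
  have "inverse S + - M / (Q * S) = (Q - M) / (Q * S)"
    using assms(2,3) by (simp add: field_simps)
  also have "\<dots> = R / Q" using assms by simp
  finally show ?thesis ..
qed

lemma fract_poly_common_denominator:
  fixes s :: "'a::idom fract poly"
  obtains d q where "d \<noteq> 0" "smult (to_fract d) s = fract_poly q"
proof (induction s arbitrary: thesis)
  case 0
  show ?case by (rule 0[of 1 0]) simp_all
next
  case (pCons c s)
  obtain d q where d: "d \<noteq> 0" "smult (to_fract d) s = fract_poly q"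
    using pCons.IH by blast
  obtain a b where c: "c = to_fract a / to_fract b" "b \<noteq> 0"
    by (cases c) (simp add: Fract_conv_to_fract)
  have "smult (to_fract (b * d)) (pCons c s) = fract_poly (pCons (a * d) (smult b q))"
    using c d by (simp add: map_poly_pCons flip: smult_smult)
  then show ?case
    using c d by (intro pCons.prems[of "b * d" "pCons (a * d) (smult b q)"]) simp_all
qed

lemma to_fract_const_inverse: "to_fract [:inverse c:] = inverse (to_fract [:c::'a::field:])"
proof (cases "c = 0")
  case False
  then have "to_fract [:c:] * to_fract [:inverse c:] = 1"
    by (simp flip: to_fract_mult one_pCons)
  then show ?thesis by (simp add: inverse_unique)
qed simp

lemma to_fract_const_sum: "to_fract [:sum f E:] = (\<Sum>e\<in>E. to_fract [:f e:])"
  by (simp flip: smult_one add: smult_sum)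

lemma to_fract_smult: "to_fract (smult c p) = to_fract [:c:] * to_fract p"
  by (simp flip: to_fract_mult)

lemma degree_fract_poly [simp]: "degree (fract_poly p) = degree p"
  by (rule degree_map_poly) simp

lemma emb_eq_to_fract: "emb = to_fract"
  by (simp add: fun_eq_iff emb_def to_fract_def)

lemma Dx_eq: "Dx = range (\<lambda>p. to_fract (fract_poly p))"
  by (simp add: Dx_def emb_eq_to_fract to_fract_def)

lemma Kx_eq: "Kx = range to_fract"
  by (simp add: Kx_def to_fract_def)

definition Dx_of_degree :: "nat set \<Rightarrow> 'a::idom ratfun set" where
  "Dx_of_degree N = {to_fract (fract_poly p) |p. p \<noteq> 0 \<and> degree p \<in> N}"

lemma Dx_of_degree_subset_Dx: "Dx_of_degree N \<subseteq> Dx"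
  unfolding Dx_of_degree_def Dx_eq by blast

lemma Dx_of_degree_mono: "N \<subseteq> M \<Longrightarrow> Dx_of_degree N \<subseteq> Dx_of_degree M"
  unfolding Dx_of_degree_def by blast

lemma Dx_of_degree_disjoint:
  "N \<inter> M = {} \<Longrightarrow> Dx_of_degree N \<inter> Dx_of_degree M = {}"
  unfolding Dx_of_degree_def by auto

lemma egyptian_elem_Dx_of_degree_inverse:
  fixes s :: "'a::idom fract poly"
  assumes egyptian: "egyptian (range (to_fract :: 'a \<Rightarrow> 'a fract))" and "s \<noteq> 0"
  shows "egyptian_elem (Dx_of_degree {degree s}) (inverse (to_fract s))"
proof -
  obtain d q where d: "d \<noteq> 0" and q: "smult (to_fract d) s = fract_poly q"
    by (rule fract_poly_common_denominator)
  have "fract_poly q \<noteq> 0 \<and> degree (fract_poly q) = degree s"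
    using \<open>s \<noteq> 0\<close> d by (simp flip: q)
  then have "q \<noteq> 0" "degree q = degree s" by simp_all
  have "egyptian_elem (range to_fract) (to_fract d)"
    using egyptian d unfolding egyptian_def by simp
  then obtain E where E: "finite E" "E \<subseteq> range to_fract - {0}" "to_fract d = (\<Sum>e\<in>E. inverse e)"
    unfolding egyptian_elem_def by blast
  define c where "c = to_fract [:to_fract d:]"
  define f where "f e = to_fract (smult e (fract_poly q))" for e
  have "c \<noteq> 0" using d by (simp add: c_def)
  have "to_fract (fract_poly q) = c * to_fract s"
    unfolding c_def q[symmetric] by (rule to_fract_smult)
  then have f_eq: "f e = to_fract [:e:] * (c * to_fract s)" for e
    unfolding f_def by (simp only: to_fract_smult)
  have "(\<Sum>e\<in>E. inverse (f e)) = (\<Sum>e\<in>E. inverse (to_fract [:e:])) * inverse (c * to_fract s)"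
    by (simp add: f_eq sum_distrib_right)
  also have "\<dots> = c * inverse (c * to_fract s)"
    by (simp add: c_def E(3) to_fract_const_sum flip: to_fract_const_inverse)
  also have "\<dots> = inverse (to_fract s)" using \<open>c \<noteq> 0\<close> by simp
  finally have "inverse (to_fract s) = (\<Sum>e\<in>E. inverse (f e))" ..
  moreover have "inj_on f E"
  proof (rule inj_onI)
    fix e e' assume "f e = f e'"
    then have "smult (e - e') (fract_poly q) = 0" by (simp add: f_def smult_diff_left)
    then show "e = e'" using \<open>q \<noteq> 0\<close> by simp
  qed
  moreover have "f ` E \<subseteq> Dx_of_degree {degree s} - {0}"
  proof
    fix x assume "x \<in> f ` E"
    then obtain e where "e \<in> E" "x = f e" by blast
    moreover have "e \<in> range to_fract" "e \<noteq> 0" using \<open>e \<in> E\<close> E(2) by auto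
    then obtain e0 where "e = to_fract e0" "e0 \<noteq> 0" by auto
    ultimately show "x \<in> Dx_of_degree {degree s} - {0}"
      using \<open>q \<noteq> 0\<close> \<open>degree q = degree s\<close> unfolding Dx_of_degree_def f_def
      by (auto intro!: exI[of _ "smult e0 q"])
  qed
  ultimately show ?thesis using E(1) by (simp add: egyptian_elemI)
qed

lemma egyptian_elem_Dx_of_degree_fraction:
  fixes r q :: "'a::idom fract poly"
  assumes egyptian: "egyptian (range (to_fract :: 'a \<Rightarrow> 'a fract))"
  shows "q \<noteq> 0 \<Longrightarrow> r \<noteq> 0 \<Longrightarrow> degree r \<le> degree q \<Longrightarrow>
    egyptian_elem (Dx_of_degree {degree q - degree r..}) (to_fract r / to_fract q)"
proof (induction "degree r" arbitrary: r q rule: less_induct)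
  case less
  define s where "s = q div r"
  define m where "m = q mod r"
  have "s \<noteq> 0" "degree s = degree q - degree r"
    unfolding s_def using less.prems by (rule degree_div_eq_diff)+
  have deg_m: "m = 0 \<or> degree m < degree r"
    unfolding m_def using \<open>r \<noteq> 0\<close> by (rule degree_mod_less)
  have "to_fract q = to_fract s * to_fract r + to_fract m"
    by (simp add: s_def m_def flip: to_fract_mult to_fract_add)
  then have split: "to_fract r / to_fract q =
      inverse (to_fract s) + - to_fract m / (to_fract q * to_fract s)"
    by (rule inverse_add_divide_eq) (use \<open>s \<noteq> 0\<close> \<open>q \<noteq> 0\<close> in simp_all)
  have head: "egyptian_elem (Dx_of_degree {degree s}) (inverse (to_fract s))"
    using egyptian \<open>s \<noteq> 0\<close> by (rule egyptian_elem_Dx_of_degree_inverse)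
  have tail: "egyptian_elem (Dx_of_degree {Suc (degree s)..})
      (- to_fract m / (to_fract q * to_fract s))"
  proof (cases "m = 0")
    case False
    then have "degree (- m) < degree r" using deg_m by simp
    moreover have "degree (q * s) = degree q + degree s"
      using \<open>q \<noteq> 0\<close> \<open>s \<noteq> 0\<close> by (rule degree_mult_eq)
    ultimately have "egyptian_elem (Dx_of_degree {degree (q * s) - degree (- m)..})
        (to_fract (- m) / to_fract (q * s))"
      using less False \<open>q \<noteq> 0\<close> \<open>s \<noteq> 0\<close> by (intro less.hyps) auto
    moreover have "{degree (q * s) - degree (- m)..} \<subseteq> {Suc (degree s)..}"
      using \<open>degree (q * s) = _\<close> \<open>degree (- m) < degree r\<close> less.prems(3) by auto
    ultimately show ?thesis
      by (simp add: egyptian_elem_mono[OF _ Dx_of_degree_mono])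
  qed (simp add: egyptian_elem_0)
  have "egyptian_elem (Dx_of_degree {degree s} \<union> Dx_of_degree {Suc (degree s)..})
      (to_fract r / to_fract q)"
    unfolding split using head tail Dx_of_degree_disjoint by (rule egyptian_elem_add) auto
  moreover have "Dx_of_degree {degree s} \<union> Dx_of_degree {Suc (degree s)..} \<subseteq>
      Dx_of_degree {degree q - degree r..}"
    using \<open>degree s = _\<close> by (intro Un_least Dx_of_degree_mono) auto
  ultimately show ?case by (rule egyptian_elem_mono)
qed

lemma bonaccian_Dx:
  assumes egyptian: "egyptian (range (to_fract :: 'a::idom \<Rightarrow> 'a fract))"
  shows "bonaccian (Dx :: 'a ratfun set)"
  unfolding bonaccian_def
proof (intro allI impI)
  fix \<alpha> :: "'a ratfun"
  assume "\<alpha> \<noteq> 0"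
  obtain p q where \<alpha>: "\<alpha> = to_fract p / to_fract q" and "q \<noteq> 0"
    by (cases \<alpha>) (simp add: Fract_conv_to_fract)
  with \<open>\<alpha> \<noteq> 0\<close> have "p \<noteq> 0" by auto
  have Dx_fraction: "egyptian_elem Dx (to_fract a / to_fract b)"
    if "a \<noteq> 0" "b \<noteq> 0" "degree a \<le> degree b" for a b :: "'a fract poly"
    using egyptian_elem_Dx_of_degree_fraction[OF egyptian that(2,1,3)] Dx_of_degree_subset_Dx
    by (rule egyptian_elem_mono)
  show "egyptian_elem Dx \<alpha> \<or> egyptian_elem Dx (inverse \<alpha>)"
  proof (cases "degree p \<le> degree q")
    case True
    then show ?thesis using Dx_fraction \<open>p \<noteq> 0\<close> \<open>q \<noteq> 0\<close> \<alpha> by simp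
  next
    case False
    then show ?thesis using Dx_fraction[of q p] \<open>p \<noteq> 0\<close> \<open>q \<noteq> 0\<close> \<alpha> by simp
  qed
qed

lemma R_ring_Dx_eq_R_ring_Kx:
  assumes egyptian: "egyptian (range (to_fract :: 'a::idom \<Rightarrow> 'a fract))"
  shows "R_ring (Dx :: 'a ratfun set) = R_ring Kx"
proof
  show "R_ring Dx \<subseteq> R_ring (Kx :: 'a ratfun set)"
    by (rule R_ring_mono) (auto simp: Dx_eq Kx_eq)
  show "R_ring Kx \<subseteq> R_ring (Dx :: 'a ratfun set)"
  proof (rule R_ring_subsetI)
    fix b :: "'a ratfun"
    assume "b \<in> Kx - {0}"
    then obtain f where b: "b = to_fract f" and "f \<noteq> 0" by (auto simp: Kx_eq)
    have "egyptian_elem (Dx_of_degree {degree f}) (inverse b)"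
      unfolding b using egyptian \<open>f \<noteq> 0\<close> by (rule egyptian_elem_Dx_of_degree_inverse)
    then have "egyptian_elem Dx (inverse b)"
      using Dx_of_degree_subset_Dx by (rule egyptian_elem_mono)
    then show "inverse b \<in> R_ring Dx" by (rule egyptian_elem_in_R_ring)
  qed
qed

theorem proposition2p15:
  assumes "egyptian (range (emb :: 'a::idom \<Rightarrow> 'a fract))"
  shows "R_ring (Dx :: 'a ratfun set) = R_ring (Kx :: 'a ratfun set) \<and> bonaccian (Dx :: 'a ratfun set)"
  using R_ring_Dx_eq_R_ring_Kx bonaccian_Dx assms unfolding emb_eq_to_fract by blast

end
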